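(* Let $\eta$ be a denoiser family obeying the scaling relation, $\tau\in\Theta$, and $\nu=\{\nu_N\}$ a sequence such that for every $\sigma>0$ the limit $\lim_{N\to\infty}\frac1N\mathbb E_{\nu_N}\|\mathbf X-\eta(\mathbf X+\sigma\mathbf Z;\tau,\sigma)\|_2^2$ exists. Then $$\delta_{SE}(\tau,\nu\mid\eta)=M(\tau,\nu\mid\eta)$$ (both sides possibly $+\infty$).
   Context: A denoiser family is a collection of maps $\eta(\cdot;\tau,\sigma):\mathbb R^N\to\mathbb R^N$ ($N\ge1$, $\tau\in\Theta$, $\sigma>0$) satisfying the scaling relation $\eta(y;\tau,\sigma)=\sigma\,\eta(y/\sigma;\tau,1)$. For $\nu=\{\nu_N\}$, $\nu_N\in\mathcal P(\mathbb R^N)$, $\delta>0$, $m>0$, the state evolution map is $$\Psi(m;\delta,\tau,\nu)=\lim_{N\to\infty}\frac1N\mathbb E_{\nu_N}\Big\|\mathbf X-\eta\Big(\mathbf X+\sqrt{m/\delta}\,\mathbf Z;\tau,\sqrt{m/\delta}\Big)\Big\|_2^2,$$ with $\mathbf X\sim\nu_N$ independent of $\mathbf Z\sim\mathsf N(0,I_{N\times N})$. The highest fixed point is $\mathrm{HFP}(\delta,\tau,\nu)=\sup\big(\{0\}\cup\{m>0:\Psi(m;\delta,\tau,\nu)\ge m\}\big)$. Define $\delta_{SE}(\tau,\nu\mid\eta)=\inf\{\delta>0:\mathrm{HFP}(\delta,\tau,\nu)=0\}$ (with $\inf\emptyset=+\infty$) and $$M(\tau,\nu\mid\eta)=\sup_{\sigma>0}\lim_{N\to\infty}\frac{1}{N\sigma^2}\mathbb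 E_{\nu_N}\|\mathbf X-\eta(\mathbf X+\sigma\mathbf Z;\tau,\sigma)\|_2^2.$$ *)

theory Defs
  imports "HOL-Probability.Probability"
begin

text \<open>Vectors of R^N are represented as functions nat => real on the index set {..<N}
  (the carrier of the product measure space PiM {..<N} (%_. borel)).\<close>

definition std_gauss :: "nat \<Rightarrow> (nat \<Rightarrow> real) measure" where
  "std_gauss N = PiM {..<N} (\<lambda>_. density lborel std_normal_density)"

definition denoiser_family ::
  "'t set \<Rightarrow> (nat \<Rightarrow> (nat \<Rightarrow> real) \<Rightarrow> 't \<Rightarrow> real \<Rightarrow> (nat \<Rightarrow> real)) \<Rightarrow> bool" where
  "denoiser_family \<Theta> \<eta> \<longleftrightarrow>
     (\<forall>N \<tau> \<sigma> y i. \<tau> \<in> \<Theta> \<and> 0 < \<sigma> \<and> y \<in> space (PiM {..<N} (\<lambda>_. borel)) \<and> i < N \<longrightarrow>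
        \<eta> N y \<tau> \<sigma> i = \<sigma> * \<eta> N (\<lambda>j\<in>{..<N}. y j / \<sigma>) \<tau> 1 i)"

definition denoiser_risk ::
  "(nat \<Rightarrow> (nat \<Rightarrow> real) measure) \<Rightarrow> (nat \<Rightarrow> (nat \<Rightarrow> real) \<Rightarrow> 't \<Rightarrow> real \<Rightarrow> (nat \<Rightarrow> real))
    \<Rightarrow> 't \<Rightarrow> real \<Rightarrow> nat \<Rightarrow> ereal" where
  "denoiser_risk \<nu> \<eta> \<tau> \<sigma> N =
     ereal (1 / real N) *
     enn2ereal (\<integral>\<^sup>+ w. ennreal (\<Sum>i<N. (fst w i - \<eta> N (\<lambda>j\<in>{..<N}. fst w j + \<sigma> * snd w j) \<tau> \<sigma> i)\<^sup>2)
                  \<partial>(\<nu> N \<Otimes>\<^sub>M std_gauss N))"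

definition SE_map ::
  "(nat \<Rightarrow> (nat \<Rightarrow> real) \<Rightarrow> 't \<Rightarrow> real \<Rightarrow> (nat \<Rightarrow> real)) \<Rightarrow> real \<Rightarrow> real \<Rightarrow> 't
    \<Rightarrow> (nat \<Rightarrow> (nat \<Rightarrow> real) measure) \<Rightarrow> ereal" where
  "SE_map \<eta> m \<delta> \<tau> \<nu> = lim (denoiser_risk \<nu> \<eta> \<tau> (sqrt (m / \<delta>)))"

definition HFP ::
  "(nat \<Rightarrow> (nat \<Rightarrow> real) \<Rightarrow> 't \<Rightarrow> real \<Rightarrow> (nat \<Rightarrow> real)) \<Rightarrow> real \<Rightarrow> 't
    \<Rightarrow> (nat \<Rightarrow> (nat \<Rightarrow> real) measure) \<Rightarrow> ereal" where
  "HFP \<eta> \<delta> \<tau> \<nu> = Sup ({0} \<union> {ereal m | m. 0 < m \<and> SE_map \<eta> m \<delta> \<tau> \<nu> \<ge> ereal m})"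

definition delta_SE ::
  "(nat \<Rightarrow> (nat \<Rightarrow> real) \<Rightarrow> 't \<Rightarrow> real \<Rightarrow> (nat \<Rightarrow> real)) \<Rightarrow> 't
    \<Rightarrow> (nat \<Rightarrow> (nat \<Rightarrow> real) measure) \<Rightarrow> ereal" where
  "delta_SE \<eta> \<tau> \<nu> = Inf (ereal ` {\<delta>. 0 < \<delta> \<and> HFP \<eta> \<delta> \<tau> \<nu> = 0})"

definition minimax_M ::
  "(nat \<Rightarrow> (nat \<Rightarrow> real) \<Rightarrow> 't \<Rightarrow> real \<Rightarrow> (nat \<Rightarrow> real)) \<Rightarrow> 't
    \<Rightarrow> (nat \<Rightarrow> (nat \<Rightarrow> real) measure) \<Rightarrow> ereal" where
  "minimax_M \<eta> \<tau> \<nu> = (SUP \<sigma>\<in>{0<..}. lim (denoiser_risk \<nu> \<eta> \<tau> \<sigma>) / ereal (\<sigma>\<^sup>2))"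

end

theory Submission
  imports Defs
begin

(* The identity delta_SE = M is a reparametrisation argument.

   Write R sigma for the limiting risk at noise level sigma and g sigma = R sigma / sigma^2.
   1. HFP(delta) = 0 iff Psi(m; delta) < m for every m > 0 (no positive point lies
      on or above the diagonal).
   2. Substituting m = delta * sigma^2, this says g sigma < delta for every sigma > 0.
   3. Hence delta_SE is the infimum of the strict upper bounds delta > 0 of g on
      (0, oo), and since g \<ge> 0 this infimum is the supremum of g, which is M. *)

lemma Inf_strict_upper_bounds_eq_SUP:
  fixes g :: "'a \<Rightarrow> ereal"
  assumes nonneg: "\<And>x. x \<in> A \<Longrightarrow> g x \<ge> 0" and "A \<noteq> {}"
  shows "Inf (ereal ` {\<delta>. 0 < \<delta> \<and> (\<forall>x\<in>A. g x < ereal \<delta>)}) = (SUP x\<in>A. g x)"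
    (is "Inf (ereal ` ?D) = ?M")
proof (rule antisym)
  have M_nonneg: "?M \<ge> 0"
    using \<open>A \<noteq> {}\<close> nonneg by (meson SUP_upper ex_in_conv order_trans)
  show "Inf (ereal ` ?D) \<le> ?M"
  proof (rule dense_ge)
    fix y assume y: "?M < y"
    show "Inf (ereal ` ?D) \<le> y"
    proof (cases y)
      case (real r)
      have "r > 0" using y M_nonneg real by (metis ereal_less(2) order_le_less_trans)
      moreover have "\<forall>x\<in>A. g x < ereal r"
        using y real by (metis SUP_upper order_le_less_trans)
      ultimately show ?thesis using real by (auto intro: Inf_lower)
    next
      case PInf
      then show ?thesis by simp
    next
      case MInf
      then show ?thesis using y by simp
    qed
  qed
  show "?M \<le> Inf (ereal ` ?D)"
  proof (rule Inf_greatest)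
    fix b assume "b \<in> ereal ` ?D"
    then show "?M \<le> b"
      by (force intro: SUP_least less_imp_le)
  qed
qed

lemma HFP_eq_0_iff:
  "HFP \<eta> \<delta> \<tau> \<nu> = 0 \<longleftrightarrow> (\<forall>m>0. SE_map \<eta> m \<delta> \<tau> \<nu> < ereal m)"
proof -
  define S where "S = {ereal m | m. 0 < m \<and> SE_map \<eta> m \<delta> \<tau> \<nu> \<ge> ereal m}"
  have "HFP \<eta> \<delta> \<tau> \<nu> = Sup ({0} \<union> S)"
    unfolding HFP_def S_def by simp
  moreover have "Sup ({0} \<union> S) = 0 \<longleftrightarrow> S = {}"
  proof
    assume "Sup ({0} \<union> S) = 0"
    then have "\<forall>s\<in>S. s \<le> 0" by (metis Sup_upper UnCI)
    then show "S = {}" unfolding S_def by auto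
  qed simp
  moreover have "S = {} \<longleftrightarrow> (\<forall>m>0. SE_map \<eta> m \<delta> \<tau> \<nu> < ereal m)"
    unfolding S_def by (auto simp: not_le)
  ultimately show ?thesis by simp
qed

lemma SE_map_below_diagonal_iff:
  assumes "0 < \<delta>"
  shows "(\<forall>m>0. SE_map \<eta> m \<delta> \<tau> \<nu> < ereal m)
     \<longleftrightarrow> (\<forall>\<sigma>>0. lim (denoiser_risk \<nu> \<eta> \<tau> \<sigma>) / ereal (\<sigma>\<^sup>2) < ereal \<delta>)"
proof -
  have normalise: "r / ereal (\<sigma>\<^sup>2) < ereal \<delta> \<longleftrightarrow> r < ereal (\<delta> * \<sigma>\<^sup>2)"
    if "\<sigma> > 0" for r \<sigma>
    using ereal_divide_less_iff[of "ereal (\<sigma>\<^sup>2)" r "ereal \<delta>"] that by simp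
  have sigma_of_m: "sqrt (\<delta> * \<sigma>\<^sup>2 / \<delta>) = \<sigma>" if "\<sigma> > 0" for \<sigma>
    using that assms by simp
  have m_of_sigma: "\<delta> * (sqrt (m / \<delta>))\<^sup>2 = m" "sqrt (m / \<delta>) > 0" if "m > 0" for m
    using that assms by simp_all
  show ?thesis
  proof
    assume below: "\<forall>m>0. SE_map \<eta> m \<delta> \<tau> \<nu> < ereal m"
    show "\<forall>\<sigma>>0. lim (denoiser_risk \<nu> \<eta> \<tau> \<sigma>) / ereal (\<sigma>\<^sup>2) < ereal \<delta>"
    proof (intro allI impI)
      fix \<sigma> :: real assume "\<sigma> > 0"
      then have "SE_map \<eta> (\<delta> * \<sigma>\<^sup>2) \<delta> \<tau> \<nu> < ereal (\<delta> * \<sigma>\<^sup>2)"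
        using below assms by simp
      then have "lim (denoiser_risk \<nu> \<eta> \<tau> \<sigma>) < ereal (\<delta> * \<sigma>\<^sup>2)"
        unfolding SE_map_def sigma_of_m[OF \<open>\<sigma> > 0\<close>] .
      then show "lim (denoiser_risk \<nu> \<eta> \<tau> \<sigma>) / ereal (\<sigma>\<^sup>2) < ereal \<delta>"
        using normalise \<open>\<sigma> > 0\<close> by blast
    qed
  next
    assume bound: "\<forall>\<sigma>>0. lim (denoiser_risk \<nu> \<eta> \<tau> \<sigma>) / ereal (\<sigma>\<^sup>2) < ereal \<delta>"
    show "\<forall>m>0. SE_map \<eta> m \<delta> \<tau> \<nu> < ereal m"
    proof (intro allI impI)
      fix m :: real assume "m > 0"
      then have "lim (denoiser_risk \<nu> \<eta> \<tau> (sqrt (m / \<delta>))) < ereal m"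
        using bound m_of_sigma[of m] normalise[of "sqrt (m / \<delta>)"] by metis
      then show "SE_map \<eta> m \<delta> \<tau> \<nu> < ereal m"
        by (simp add: SE_map_def)
    qed
  qed
qed

lemma lim_denoiser_risk_nonneg:
  assumes "convergent (denoiser_risk \<nu> \<eta> \<tau> \<sigma>)"
  shows "lim (denoiser_risk \<nu> \<eta> \<tau> \<sigma>) \<ge> 0"
proof -
  have "denoiser_risk \<nu> \<eta> \<tau> \<sigma> N \<ge> 0" for N
    unfolding denoiser_risk_def by (rule ereal_0_le_mult) simp_all
  with assms show ?thesis
    by (intro LIMSEQ_le_const) (auto simp: convergent_LIMSEQ_iff)
qed

theorem mainTheorem15:
  fixes \<Theta> :: "'t set" and \<tau> :: 't
    and \<eta> :: "nat \<Rightarrow> (nat \<Rightarrow> real) \<Rightarrow> 't \<Rightarrow> real \<Rightarrow> (nat \<Rightarrow> real)"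
    and \<nu> :: "nat \<Rightarrow> (nat \<Rightarrow> real) measure"
  assumes "denoiser_family \<Theta> \<eta>"
    and "\<tau> \<in> \<Theta>"
    and "\<forall>N\<ge>1. prob_space (\<nu> N) \<and> sets (\<nu> N) = sets (PiM {..<N} (\<lambda>_. borel))"
    and "\<forall>\<sigma>>0. convergent (denoiser_risk \<nu> \<eta> \<tau> \<sigma>)"
  shows "delta_SE \<eta> \<tau> \<nu> = minimax_M \<eta> \<tau> \<nu>"
proof -
  define g where "g \<sigma> = lim (denoiser_risk \<nu> \<eta> \<tau> \<sigma>) / ereal (\<sigma>\<^sup>2)" for \<sigma>
  have g_nonneg: "g \<sigma> \<ge> 0" if "\<sigma> \<in> {0<..}" for \<sigma>
    using lim_denoiser_risk_nonneg[OF assms(4)[rule_format]] that unfolding g_def by simp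
  have "{\<delta>. 0 < \<delta> \<and> HFP \<eta> \<delta> \<tau> \<nu> = 0} = {\<delta>. 0 < \<delta> \<and> (\<forall>\<sigma>\<in>{0<..}. g \<sigma> < ereal \<delta>)}"
    using HFP_eq_0_iff SE_map_below_diagonal_iff unfolding g_def by fastforce
  then have "delta_SE \<eta> \<tau> \<nu> = Inf (ereal ` {\<delta>. 0 < \<delta> \<and> (\<forall>\<sigma>\<in>{0<..}. g \<sigma> < ereal \<delta>)})"
    unfolding delta_SE_def by simp
  also have "\<dots> = (SUP \<sigma>\<in>{0<..}. g \<sigma>)"
    using g_nonneg by (intro Inf_strict_upper_bounds_eq_SUP) auto
  finally show ?thesis
    unfolding minimax_M_def g_def .
qed

end
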